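(* Let $G$ be a finite nonabelian group. Then $U(G)\le G'\cap Z(G)\le G'Z(G)\le V(G)$.
   Context: For a normal subgroup $H$ of $G$, $\mathrm{Irr}(G\mid H)$ is the set of $\chi\in\mathrm{Irr}(G)$ with $H\not\le\ker(\chi)$, and $V(G\mid H)$ is the subgroup generated by all $g\in G$ such that $\chi(g)\ne0$ for some $\chi\in\mathrm{Irr}(G\mid H)$. For a normal subgroup $N$, $U(G\mid N)$ is the product of all normal subgroups $H$ of $G$ with $V(G\mid H)\le N$, and $U(G)=U(G\mid Z(G))$. $V(G)$ is the subgroup generated by all $g\in G$ such that $\chi(g)\neq 0$ for some nonlinear $\chi\in\mathrm{Irr}(G)$ (equivalently $V(G)=V(G\mid G')$). *)

theory Defs
  imports "HOL-Algebra.Algebra" "Jordan_Normal_Form.Matrix"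
begin

definition is_rep :: "('a, 'b) monoid_scheme \<Rightarrow> nat \<Rightarrow> ('a \<Rightarrow> complex mat) \<Rightarrow> bool" where
  "is_rep G n \<rho> \<longleftrightarrow>
     (\<forall>g \<in> carrier G. \<rho> g \<in> carrier_mat n n) \<and>
     (\<forall>g \<in> carrier G. \<forall>h \<in> carrier G. \<rho> (g \<otimes>\<^bsub>G\<^esub> h) = \<rho> g * \<rho> h) \<and>
     \<rho> \<one>\<^bsub>G\<^esub> = 1\<^sub>m n"

definition invariant_subspace :: "('a, 'b) monoid_scheme \<Rightarrow> nat \<Rightarrow> ('a \<Rightarrow> complex mat) \<Rightarrow> complex vec set \<Rightarrow> bool" where
  "invariant_subspace G n \<rho> W \<longleftrightarrow>
     W \<subseteq> carrier_vec n \<and> 0\<^sub>v n \<in> W \<and>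
     (\<forall>v \<in> W. \<forall>w \<in> W. v + w \<in> W) \<and>
     (\<forall>c. \<forall>v \<in> W. c \<cdot>\<^sub>v v \<in> W) \<and>
     (\<forall>g \<in> carrier G. \<forall>v \<in> W. \<rho> g *\<^sub>v v \<in> W)"

definition irr_rep :: "('a, 'b) monoid_scheme \<Rightarrow> nat \<Rightarrow> ('a \<Rightarrow> complex mat) \<Rightarrow> bool" where
  "irr_rep G n \<rho> \<longleftrightarrow> is_rep G n \<rho> \<and> n > 0 \<and>
     (\<forall>W. invariant_subspace G n \<rho> W \<longrightarrow> W = {0\<^sub>v n} \<or> W = carrier_vec n)"

definition Irr :: "('a, 'b) monoid_scheme \<Rightarrow> ('a \<Rightarrow> complex) set" where
  "Irr G = {\<chi>. \<exists>n \<rho>. irr_rep G n \<rho> \<and>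
                 \<chi> = (\<lambda>g. if g \<in> carrier G then (\<Sum>i<n. \<rho> g $$ (i, i)) else 0)}"

definition char_kernel :: "('a, 'b) monoid_scheme \<Rightarrow> ('a \<Rightarrow> complex) \<Rightarrow> 'a set" where
  "char_kernel G \<chi> = {g \<in> carrier G. \<chi> g = \<chi> \<one>\<^bsub>G\<^esub>}"

definition Irr_rel :: "('a, 'b) monoid_scheme \<Rightarrow> 'a set \<Rightarrow> ('a \<Rightarrow> complex) set" where
  "Irr_rel G H = {\<chi> \<in> Irr G. \<not> H \<subseteq> char_kernel G \<chi>}"

definition V_rel :: "('a, 'b) monoid_scheme \<Rightarrow> 'a set \<Rightarrow> 'a set" where
  "V_rel G H = generate G {g \<in> carrier G. \<exists>\<chi> \<in> Irr_rel G H. \<chi> g \<noteq> 0}"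

text \<open>U(G | N): product (= subgroup generated by the union) of all normal subgroups H with V(G|H) <= N.\<close>
definition U_rel :: "('a, 'b) monoid_scheme \<Rightarrow> 'a set \<Rightarrow> 'a set" where
  "U_rel G N = generate G (\<Union> {H. H \<lhd> G \<and> V_rel G H \<subseteq> N})"

definition center :: "('a, 'b) monoid_scheme \<Rightarrow> 'a set" where
  "center G = {z \<in> carrier G. \<forall>g \<in> carrier G. z \<otimes>\<^bsub>G\<^esub> g = g \<otimes>\<^bsub>G\<^esub> z}"

definition U_grp :: "('a, 'b) monoid_scheme \<Rightarrow> 'a set" where
  "U_grp G = U_rel G (center G)"

definition V_grp :: "('a, 'b) monoid_scheme \<Rightarrow> 'a set" where
  "V_grp G = generate G {g \<in> carrier G. \<exists>\<chi> \<in> Irr G. \<chi> \<one>\<^bsub>G\<^esub> \<noteq> 1 \<and> \<chi> g \<noteq> 0}"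

end

theory Submission
  imports Defs "Jordan_Normal_Form.DL_Rank" "Jordan_Normal_Form.Char_Poly"
begin

text \<open>
  Key fact: if \<open>N\<close> is normal in the finite group \<open>G\<close> and \<open>g \<notin> N\<close>, some irreducible
  representation trivial on \<open>N\<close> has a character value at \<open>g\<close> that is neither \<open>0\<close> nor its
  degree. Otherwise, by induction along a composition series (block triangularisation, no
  complete reducibility needed), the character at \<open>g\<close> of every representation trivial on
  \<open>N\<close> would be a natural number, positive as soon as the representation fixes a nonzero
  vector; but the permutation representation on the cosets of \<open>N\<close> fixes the all-ones
  vector and has character \<open>0\<close> at \<open>g\<close>.

  With \<open>N = 1\<close> this puts \<open>G' - 1\<close> into \<open>V(G)\<close> (linear characters are trivial on \<open>G'\<close>)
  and every normal \<open>H\<close> into \<open>V(G|H)\<close>. By Schur's lemma central elements have nonzero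
  values under irreducible characters, so \<open>Z(G) \<le> V(G)\<close>, and linear characters never vanish,
  so with \<open>N = G'\<close> we get \<open>V(G|H) = G\<close> whenever \<open>H \<not>\<le> G'\<close>. Since \<open>Z(G) \<noteq> G\<close>, every \<open>H\<close>
  with \<open>V(G|H) \<le> Z(G)\<close> lies in \<open>G' \<inter> Z(G)\<close>.
\<close>

section \<open>Traces and block triangular matrices\<close>

definition trace :: "'a::comm_ring_1 mat \<Rightarrow> 'a" where
  "trace A = (\<Sum>i<dim_row A. A $$ (i, i))"

lemma sum_lessThan_split_shift:
  assumes "j \<le> (k::nat)"
  shows "(\<Sum>l<k. f l) = (\<Sum>l<j. f l) + (\<Sum>l<k-j. f (l + j))"
proof -
  have "(\<Sum>l<k. f l) = (\<Sum>l<j. f l) + (\<Sum>l\<in>{j..<k}. f l)"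
    using assms by (metis atLeast0LessThan le0 sum.atLeastLessThan_concat)
  also have "(\<Sum>l\<in>{j..<k}. f l) = (\<Sum>l<k-j. f (l + j))"
    using assms sum.shift_bounds_nat_ivl[of f 0 j "k - j"] by (simp add: lessThan_atLeast0)
  finally show ?thesis .
qed

lemma trace_mult_comm:
  fixes A B :: "'a::comm_ring_1 mat"
  assumes "A \<in> carrier_mat k m" "B \<in> carrier_mat m k"
  shows "trace (A * B) = trace (B * A)"
proof -
  have "trace (A * B) = (\<Sum>i<k. \<Sum>l<m. A $$ (i, l) * B $$ (l, i))"
    using assms by (simp add: trace_def scalar_prod_def row_def col_def lessThan_atLeast0)
  also have "\<dots> = (\<Sum>l<m. \<Sum>i<k. B $$ (l, i) * A $$ (i, l))"
    by (subst sum.swap) (simp add: mult.commute)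
  also have "\<dots> = trace (B * A)"
    using assms by (simp add: trace_def scalar_prod_def row_def col_def lessThan_atLeast0)
  finally show ?thesis .
qed

lemma trace_similar:
  fixes A T T' :: "'a::comm_ring_1 mat"
  assumes "A \<in> carrier_mat k k" "T \<in> carrier_mat k k" "T' \<in> carrier_mat k k" "T * T' = 1\<^sub>m k"
  shows "trace (T' * A * T) = trace A"
proof -
  have "trace (T' * A * T) = trace (T * (T' * A))"
    using assms by (intro trace_mult_comm) auto
  also have "T * (T' * A) = A"
    using assms by (metis assoc_mult_mat left_mult_one_mat)
  finally show ?thesis .
qed

lemma eq_mat_if_mult_vec_eq:
  fixes A B :: "'a::comm_ring_1 mat"
  assumes "A \<in> carrier_mat n n" "B \<in> carrier_mat n n"
    and "\<And>v. v \<in> carrier_vec n \<Longrightarrow> A *\<^sub>v v = B *\<^sub>v v"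
  shows "A = B"
proof (rule eq_matI)
  fix i j assume "i < dim_row B" "j < dim_col B"
  then have ij: "i < n" "j < n" using assms by auto
  then have "A $$ (i, j) = (A *\<^sub>v unit_vec n j) $ i" "B $$ (i, j) = (B *\<^sub>v unit_vec n j) $ i"
    using assms(1,2) by simp_all
  moreover have "A *\<^sub>v unit_vec n j = B *\<^sub>v unit_vec n j"
    using assms(3) by simp
  ultimately show "A $$ (i, j) = B $$ (i, j)"
    by simp
qed (use assms in auto)

lemma smult_one_mult_mat_vec:
  fixes v :: "'a::comm_ring_1 vec"
  shows "v \<in> carrier_vec n \<Longrightarrow> (c \<cdot>\<^sub>m 1\<^sub>m n) *\<^sub>v v = c \<cdot>\<^sub>v v"
  by (intro eq_vecI) (auto simp: scalar_prod_def row_def if_distrib if_distribR sum.delta cong: if_cong)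

lemma mat_1x1_mult_comm:
  fixes A B :: "'a::comm_semiring_1 mat"
  assumes "A \<in> carrier_mat 1 1" "B \<in> carrier_mat 1 1"
  shows "A * B = B * A"
  using assms by (intro eq_matI) (auto simp: scalar_prod_def mult.commute)

definition block_triangular :: "nat \<Rightarrow> 'a::zero mat \<Rightarrow> bool" where
  "block_triangular j A \<longleftrightarrow> (\<forall>l i. j \<le> l \<longrightarrow> l < dim_row A \<longrightarrow> i < j \<longrightarrow> A $$ (l, i) = 0)"

definition upper_block :: "nat \<Rightarrow> 'a mat \<Rightarrow> 'a mat" where
  "upper_block j A = mat j j (\<lambda>(a, b). A $$ (a, b))"

definition lower_block :: "nat \<Rightarrow> 'a mat \<Rightarrow> 'a mat" where
  "lower_block j A = mat (dim_row A - j) (dim_row A - j) (\<lambda>(a, b). A $$ (a + j, b + j))"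

lemma upper_block_carrier [simp]: "upper_block j A \<in> carrier_mat j j"
  by (simp add: upper_block_def)

lemma dim_upper_block [simp]: "dim_row (upper_block j A) = j" "dim_col (upper_block j A) = j"
  by (simp_all add: upper_block_def)

lemma dim_lower_block [simp]:
  "dim_row (lower_block j A) = dim_row A - j" "dim_col (lower_block j A) = dim_row A - j"
  by (simp_all add: lower_block_def)

lemma lower_block_carrier [simp]: "A \<in> carrier_mat k k \<Longrightarrow> lower_block j A \<in> carrier_mat (k - j) (k - j)"
  by (simp add: lower_block_def)

lemma upper_block_one [simp]: "j \<le> k \<Longrightarrow> upper_block j (1\<^sub>m k) = 1\<^sub>m j"
  by (auto simp: upper_block_def intro!: eq_matI)

lemma lower_block_one [simp]: "lower_block j (1\<^sub>m k) = 1\<^sub>m (k - j)"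
  by (auto simp: lower_block_def intro!: eq_matI)

lemma trace_blocks:
  fixes A :: "'a::comm_ring_1 mat"
  assumes "A \<in> carrier_mat k k" "j \<le> k"
  shows "trace A = trace (upper_block j A) + trace (lower_block j A)"
  using assms sum_lessThan_split_shift[of j k "\<lambda>i. A $$ (i, i)"]
  by (simp add: trace_def upper_block_def lower_block_def)

lemma upper_block_mult:
  fixes A B :: "'a::comm_ring_1 mat"
  assumes A: "A \<in> carrier_mat k k" and B: "B \<in> carrier_mat k k" and "j \<le> k"
    and "block_triangular j B"
  shows "upper_block j (A * B) = upper_block j A * upper_block j B"
proof (rule eq_matI)
  fix a b assume "a < dim_row (upper_block j A * upper_block j B)"
    and "b < dim_col (upper_block j A * upper_block j B)"
  then have a: "a < j" and b: "b < j" by auto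
  have "upper_block j (A * B) $$ (a, b) = (\<Sum>l<k. A $$ (a, l) * B $$ (l, b))"
    using a b assms by (simp add: upper_block_def scalar_prod_def row_def col_def lessThan_atLeast0)
  also have "\<dots> = (\<Sum>l<j. A $$ (a, l) * B $$ (l, b))"
    using assms b by (simp add: sum_lessThan_split_shift[of j k] block_triangular_def)
  also have "\<dots> = (upper_block j A * upper_block j B) $$ (a, b)"
    using a b by (simp add: upper_block_def scalar_prod_def row_def col_def lessThan_atLeast0)
  finally show "upper_block j (A * B) $$ (a, b) = (upper_block j A * upper_block j B) $$ (a, b)" .
qed auto

lemma lower_block_mult:
  fixes A B :: "'a::comm_ring_1 mat"
  assumes A: "A \<in> carrier_mat k k" and B: "B \<in> carrier_mat k k" and "j \<le> k"
    and "block_triangular j A"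
  shows "lower_block j (A * B) = lower_block j A * lower_block j B"
proof (rule eq_matI)
  fix a b assume "a < dim_row (lower_block j A * lower_block j B)"
    and "b < dim_col (lower_block j A * lower_block j B)"
  then have a: "a < k - j" and b: "b < k - j" using A B by auto
  have "lower_block j (A * B) $$ (a, b) = (\<Sum>l<k. A $$ (a + j, l) * B $$ (l, b + j))"
    using a b assms by (simp add: lower_block_def scalar_prod_def row_def col_def lessThan_atLeast0)
  also have "\<dots> = (\<Sum>l<k-j. A $$ (a + j, l + j) * B $$ (l + j, b + j))"
    using assms a by (simp add: sum_lessThan_split_shift[of j k] block_triangular_def)
  also have "\<dots> = (lower_block j A * lower_block j B) $$ (a, b)"
    using a b A B by (simp add: lower_block_def scalar_prod_def row_def col_def lessThan_atLeast0)
  finally show "lower_block j (A * B) $$ (a, b) = (lower_block j A * lower_block j B) $$ (a, b)" .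
qed (use A B in auto)

lemma lower_block_mult_vec:
  fixes A :: "'a::comm_ring_1 mat"
  assumes A: "A \<in> carrier_mat k k" and u: "u \<in> carrier_vec k" and "j \<le> k"
    and "block_triangular j A"
  shows "lower_block j A *\<^sub>v vec (k - j) (\<lambda>a. u $ (a + j)) = vec (k - j) (\<lambda>a. (A *\<^sub>v u) $ (a + j))"
proof (rule eq_vecI)
  fix a assume "a < dim_vec (vec (k - j) (\<lambda>a. (A *\<^sub>v u) $ (a + j)))"
  then have a: "a < k - j" by simp
  have "(lower_block j A *\<^sub>v vec (k - j) (\<lambda>a. u $ (a + j))) $ a
      = (\<Sum>l<k-j. A $$ (a + j, l + j) * u $ (l + j))"
    using a A by (simp add: lower_block_def scalar_prod_def lessThan_atLeast0)
  also have "\<dots> = (\<Sum>l<k. A $$ (a + j, l) * u $ l)"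
    using assms a by (simp add: sum_lessThan_split_shift[of j k] block_triangular_def)
  also have "\<dots> = (A *\<^sub>v u) $ (a + j)"
    using a A u by (simp add: scalar_prod_def row_def lessThan_atLeast0)
  finally show "(lower_block j A *\<^sub>v vec (k - j) (\<lambda>a. u $ (a + j))) $ a
      = vec (k - j) (\<lambda>a. (A *\<^sub>v u) $ (a + j)) $ a" using a by simp
qed (use A in simp)

lemma upper_block_mult_vec:
  fixes A :: "'a::comm_ring_1 mat"
  assumes A: "A \<in> carrier_mat k k" and u: "u \<in> carrier_vec k" and "j \<le> k"
    and "\<forall>l. j \<le> l \<longrightarrow> l < k \<longrightarrow> u $ l = 0"
  shows "upper_block j A *\<^sub>v vec j (\<lambda>a. u $ a) = vec j (\<lambda>a. (A *\<^sub>v u) $ a)"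
proof (rule eq_vecI)
  fix a assume "a < dim_vec (vec j (\<lambda>a. (A *\<^sub>v u) $ a))"
  then have a: "a < j" by simp
  have "(upper_block j A *\<^sub>v vec j (\<lambda>a. u $ a)) $ a = (\<Sum>l<j. A $$ (a, l) * u $ l)"
    using a by (simp add: upper_block_def scalar_prod_def lessThan_atLeast0)
  also have "\<dots> = (\<Sum>l<k. A $$ (a, l) * u $ l)"
    using assms by (simp add: sum_lessThan_split_shift[of j k])
  also have "\<dots> = (A *\<^sub>v u) $ a"
    using a A u assms by (simp add: scalar_prod_def row_def lessThan_atLeast0)
  finally show "(upper_block j A *\<^sub>v vec j (\<lambda>a. u $ a)) $ a = vec j (\<lambda>a. (A *\<^sub>v u) $ a) $ a"
    using a by simp
qed simp

lemma block_triangular_conjugate: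
  fixes A T T' :: "'a::comm_ring_1 mat"
  assumes A: "A \<in> carrier_mat k k" and T: "T \<in> carrier_mat k k" "T' \<in> carrier_mat k k" "T' * T = 1\<^sub>m k"
    and coords: "\<And>i. i < j \<Longrightarrow> \<exists>c\<in>carrier_vec k. T *\<^sub>v c = A *\<^sub>v col T i \<and> (\<forall>l. j \<le> l \<longrightarrow> l < k \<longrightarrow> c $ l = 0)"
  shows "block_triangular j (T' * A * T)"
  unfolding block_triangular_def
proof (intro allI impI)
  fix l i assume l: "j \<le> l" "l < dim_row (T' * A * T)" and i: "i < j"
  obtain c where c: "c \<in> carrier_vec k" "T *\<^sub>v c = A *\<^sub>v col T i" "\<forall>l. j \<le> l \<longrightarrow> l < k \<longrightarrow> c $ l = 0"
    using coords[OF i] by blast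
  have lk: "l < k" and ik: "i < k" using l i T by auto
  have "(T' * A * T) $$ (l, i) = col (T' * A * T) i $ l"
    using lk ik A T by simp
  also have "col (T' * A * T) i = (T' * A) *\<^sub>v col T i"
    using A T ik by (intro col_mult2[of _ k k _ k]) auto
  also have "\<dots> = T' *\<^sub>v (T *\<^sub>v c)"
    using c(2) A T by auto
  also have "\<dots> = c" using T c(1) by (simp add: assoc_mult_mat_vec[symmetric])
  finally show "(T' * A * T) $$ (l, i) = 0"
    using c(3) l(1) lk by simp
qed

section \<open>Bases adapted to a subspace\<close>

context vec_space
begin

lemma maximal_lin_indpt_spans:
  assumes Y: "finite Y" "Y \<subseteq> carrier_vec n"
    and M: "maximal B (\<lambda>T. T \<subseteq> Y \<and> lin_indpt T)"
  shows "Y \<subseteq> span B"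
proof
  have B: "B \<subseteq> Y" "lin_indpt B" using M unfolding maximal_def by auto
  have Bc: "B \<subseteq> carrier_vec n" using B Y by auto
  fix s assume s: "s \<in> Y"
  show "s \<in> span B"
  proof (rule ccontr)
    assume ns: "s \<notin> span B"
    then have sB: "s \<notin> B" using span_mem[OF Bc] by auto
    have "lin_indpt (B \<union> {s})"
      using lin_dep_iff_in_span[OF Bc B(2) _ sB] ns s Y by auto
    moreover have "B \<union> {s} \<subseteq> Y" using B s by auto
    ultimately have "B \<union> {s} = B" using M unfolding maximal_def by blast
    with sB show False by auto
  qed
qed

lemma lin_indpt_extends_to_basis:
  assumes B: "finite B" "B \<subseteq> carrier_vec n" "lin_indpt B"
  obtains C where "finite C" "B \<subseteq> C" "C \<subseteq> carrier_vec n" "lin_indpt C"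
    "span C = carrier_vec n" "card C = n"
proof -
  define U where "U = set (unit_vecs n :: 'a vec list)"
  have Uc: "U \<subseteq> carrier_vec n" unfolding U_def using unit_vecs_carrier by auto
  have BU: "finite (B \<union> U)" "B \<union> U \<subseteq> carrier_vec n" using B Uc unfolding U_def by auto
  obtain C where C: "finite C" "maximal C (\<lambda>T. T \<subseteq> B \<union> U \<and> lin_indpt T)" "B \<subseteq> C"
    using maximal_exists_superset[of "B \<union> U" "\<lambda>T. T \<subseteq> B \<union> U \<and> lin_indpt T" B] BU(1) B(3) by auto
  have CBU: "C \<subseteq> B \<union> U" "lin_indpt C" using C unfolding maximal_def by auto
  have Cc: "C \<subseteq> carrier_vec n" using CBU BU by auto
  have "B \<union> U \<subseteq> span C" by (rule maximal_lin_indpt_spans[OF BU C(2)])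
  then have "span U \<subseteq> span C"
    using span_is_subset[OF _ span_is_submodule[OF Cc]] by auto
  then have spC: "span C = carrier_vec n" unfolding U_def span_unit_vecs_is_carrier
    using span_closed[OF Cc] by auto
  moreover have "card C = n"
    using dim_basis[OF C(1)] dim_is_n spC CBU Cc by (simp add: basis_def)
  ultimately show thesis
    using that C(1,3) Cc CBU(2) by blast
qed

lemma spanning_subset_extends_to_basis:
  assumes S: "finite S" "S \<subseteq> carrier_vec n" and proper: "span S \<noteq> carrier_vec n"
    and w: "w \<in> S" "w \<noteq> 0\<^sub>v n"
  obtains bs cs where "set bs \<subseteq> S" "S \<subseteq> span (set bs)" "distinct (bs @ cs)"
    "length (bs @ cs) = n" "set (bs @ cs) \<subseteq> carrier_vec n" "lin_indpt (set (bs @ cs))"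
    "0 < length bs" "length bs < n"
proof -
  have "lin_indpt {}" by (simp add: lin_dep_def)
  then obtain B where B: "finite B" "maximal B (\<lambda>T. T \<subseteq> S \<and> lin_indpt T)"
    using maximal_exists_superset[of S "\<lambda>T. T \<subseteq> S \<and> lin_indpt T" "{}"] S(1) by auto
  have BS: "B \<subseteq> S" "lin_indpt B" using B unfolding maximal_def by auto
  have SB: "S \<subseteq> span B" by (rule maximal_lin_indpt_spans[OF S B(2)])
  obtain C where C: "finite C" "B \<subseteq> C" "C \<subseteq> carrier_vec n" "lin_indpt C"
    "span C = carrier_vec n" "card C = n"
    using lin_indpt_extends_to_basis[OF B(1) _ BS(2)] BS(1) S(2) by blast
  have "span B \<noteq> carrier_vec n"
    using span_is_monotone[OF BS(1)] span_is_monotone[OF SB] span_span[OF S(2)] proper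
    by (metis (no_types, lifting) subset_antisym span_is_subset2[OF S(2)])
  then have "card B < n" using C
    by (metis card_subset_eq psubsetI psubset_card_mono)
  have "B \<noteq> {}" using SB w span_empty by auto
  obtain bs where bs: "set bs = B" "distinct bs" using finite_distinct_list[OF B(1)] by auto
  obtain cs where cs: "set cs = C - B" "distinct cs" using finite_distinct_list[of "C - B"] C(1) by auto
  have set_bcs: "set (bs @ cs) = C" and dist: "distinct (bs @ cs)" using bs cs C(2) by auto
  then have "length (bs @ cs) = n" using distinct_card[OF dist] C(6) by simp
  moreover have "length bs = card B" using distinct_card[OF bs(2)] bs(1) by simp
  moreover have "0 < length bs" using \<open>B \<noteq> {}\<close> bs(1) by auto
  ultimately show thesis
    using that[of bs cs] bs(1) BS(1) SB C set_bcs dist \<open>card B < n\<close> by auto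
qed

lemma span_prefix_coordinates:
  assumes v: "v \<in> span (set bs)" and bc: "set (bs @ cs) \<subseteq> carrier_vec n"
    and len: "length (bs @ cs) = n"
  shows "\<exists>c\<in>carrier_vec n. mat_of_cols n (bs @ cs) *\<^sub>v c = v \<and> (\<forall>l. length bs \<le> l \<longrightarrow> l < n \<longrightarrow> c $ l = 0)"
proof -
  have bsc: "set bs \<subseteq> carrier_vec n" using bc by auto
  obtain a where a: "lincomb a (set bs) = v" using finite_in_span[OF _ bsc v] by auto
  define f where "f = (\<lambda>i. if \<exists>j<i. bs ! i = bs ! j then 0 else a (bs ! i))"
  have "v = lincomb_list f bs" unfolding a[symmetric] f_def by (rule lincomb_as_lincomb_list[OF bsc])
  also have "\<dots> = mat_of_cols n bs *\<^sub>v vec (length bs) f"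
    by (rule lincomb_list_as_mat_mult, insert bsc, auto)
  finally have v2: "v = mat_of_cols n bs *\<^sub>v vec (length bs) f" .
  define c where "c = vec n (\<lambda>l. if l < length bs then f l else 0)"
  have "mat_of_cols n (bs @ cs) *\<^sub>v c = mat_of_cols n bs *\<^sub>v vec (length bs) f"
  proof (rule eq_vecI)
    fix i assume "i < dim_vec (mat_of_cols n bs *\<^sub>v vec (length bs) f)"
    then have i: "i < n" by simp
    have "(mat_of_cols n (bs @ cs) *\<^sub>v c) $ i = (\<Sum>l<n. mat_of_cols n (bs @ cs) $$ (i,l) * c $ l)"
      using i len by (auto simp: scalar_prod_def c_def row_def lessThan_atLeast0 intro!: sum.cong)
    also have "\<dots> = (\<Sum>l<length bs. mat_of_cols n (bs @ cs) $$ (i,l) * c $ l)"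
      by (rule sum.mono_neutral_right, insert len, auto simp: c_def)
    also have "\<dots> = (\<Sum>l<length bs. mat_of_cols n bs $$ (i,l) * vec (length bs) f $ l)"
      by (rule sum.cong, insert i len, auto simp: c_def mat_of_cols_index nth_append)
    also have "\<dots> = (mat_of_cols n bs *\<^sub>v vec (length bs) f) $ i"
      using i by (simp add: scalar_prod_def row_def lessThan_atLeast0)
    finally show "(mat_of_cols n (bs @ cs) *\<^sub>v c) $ i = (mat_of_cols n bs *\<^sub>v vec (length bs) f) $ i" .
  qed simp
  then show ?thesis using v2 by (intro bexI[of _ c], auto simp: c_def)
qed

lemma adapted_basis_matrix:
  assumes S: "finite S" "S \<subseteq> carrier_vec n" and proper: "span S \<noteq> carrier_vec n"
    and w: "w \<in> S" "w \<noteq> 0\<^sub>v n"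
  obtains j T T' where "0 < j" "j < n" "T \<in> carrier_mat n n" "T' \<in> carrier_mat n n"
    "T * T' = 1\<^sub>m n" "T' * T = 1\<^sub>m n" "\<forall>i<j. col T i \<in> S"
    "\<forall>s\<in>S. \<exists>c\<in>carrier_vec n. T *\<^sub>v c = s \<and> (\<forall>l. j \<le> l \<longrightarrow> l < n \<longrightarrow> c $ l = 0)"
proof -
  obtain bs cs where bc: "set bs \<subseteq> S" "S \<subseteq> span (set bs)" "distinct (bs @ cs)"
    "length (bs @ cs) = n" "set (bs @ cs) \<subseteq> carrier_vec n" "lin_indpt (set (bs @ cs))"
    "0 < length bs" "length bs < n"
    using spanning_subset_extends_to_basis[OF S proper w] by blast
  define T where "T = mat_of_cols n (bs @ cs)"
  have T: "T \<in> carrier_mat n n" unfolding T_def using bc(4) mat_of_cols_carrier(1)[of n "bs @ cs"] by simp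
  have "rank T = n" using lin_indpt_full_rank[OF T] bc(3,5,6) by (simp add: T_def)
  then have "det T \<noteq> 0" using det_rank_iff[OF T] by simp
  from det_non_zero_imp_unit[OF T this, of "()"]
  obtain T' where T': "T' \<in> carrier_mat n n" "T * T' = 1\<^sub>m n" "T' * T = 1\<^sub>m n"
    unfolding Units_def ring_mat_def by auto
  have "col T i \<in> S" if i: "i < length bs" for i
  proof -
    have "col T i = (bs @ cs) ! i" unfolding T_def
      by (rule col_mat_of_cols, insert i bc(5), auto simp: nth_append)
    then show ?thesis using bc(1) i by (auto simp: nth_append)
  qed
  moreover have "\<forall>s\<in>S. \<exists>c\<in>carrier_vec n. T *\<^sub>v c = s \<and> (\<forall>l. length bs \<le> l \<longrightarrow> l < n \<longrightarrow> c $ l = 0)"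
    using span_prefix_coordinates[OF _ bc(5) bc(4)] bc(2) unfolding T_def by blast
  ultimately show thesis
    using that[of "length bs" T T'] bc T T' by blast
qed

end

section \<open>Representations\<close>

definition has_fixed_vector :: "('g, 'b) monoid_scheme \<Rightarrow> nat \<Rightarrow> ('g \<Rightarrow> complex mat) \<Rightarrow> bool" where
  "has_fixed_vector G n \<rho> \<longleftrightarrow> (\<exists>v\<in>carrier_vec n. v \<noteq> 0\<^sub>v n \<and> (\<forall>x\<in>carrier G. \<rho> x *\<^sub>v v = v))"

lemma is_rep_carrier: "is_rep G n \<rho> \<Longrightarrow> x \<in> carrier G \<Longrightarrow> \<rho> x \<in> carrier_mat n n"
  by (simp add: is_rep_def)

lemma is_rep_mult:
  "is_rep G n \<rho> \<Longrightarrow> x \<in> carrier G \<Longrightarrow> y \<in> carrier G \<Longrightarrow> \<rho> (x \<otimes>\<^bsub>G\<^esub> y) = \<rho> x * \<rho> y"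
  by (simp add: is_rep_def)

lemma is_rep_one: "is_rep G n \<rho> \<Longrightarrow> \<rho> \<one>\<^bsub>G\<^esub> = 1\<^sub>m n"
  by (simp add: is_rep_def)

lemma (in group) is_rep_r_inv: "is_rep G n \<rho> \<Longrightarrow> x \<in> carrier G \<Longrightarrow> \<rho> x * \<rho> (inv x) = 1\<^sub>m n"
  by (metis inv_closed is_rep_mult is_rep_one r_inv)

lemma is_rep_hom_comp:
  assumes "group G" "group H" and f: "f \<in> hom G H" and rep: "is_rep H n \<rho>"
  shows "is_rep G n (\<lambda>x. \<rho> (f x))"
proof -
  interpret group_hom G H f
    using assms by (simp add: group_hom_def group_hom_axioms_def)
  show ?thesis
    using rep by (auto simp: is_rep_def)
qed

lemma is_rep_conjugate:
  assumes rep: "is_rep G k \<sigma>" and T: "T \<in> carrier_mat k k" "T' \<in> carrier_mat k k"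
    "T * T' = 1\<^sub>m k" "T' * T = 1\<^sub>m k"
  shows "is_rep G k (\<lambda>x. T' * \<sigma> x * T)"
  unfolding is_rep_def
proof (intro conjI ballI)
  fix x y assume x: "x \<in> carrier G" and y: "y \<in> carrier G"
  note \<sigma> = is_rep_carrier[OF rep x] is_rep_carrier[OF rep y]
  have "T' * \<sigma> x * T * (T' * \<sigma> y * T) = T' * \<sigma> x * (T * T') * \<sigma> y * T"
    using \<sigma> T(1,2) by (simp add: assoc_mult_mat[of _ k k _ k _ k])
  also have "\<dots> = T' * \<sigma> (x \<otimes>\<^bsub>G\<^esub> y) * T"
    unfolding \<open>T * T' = 1\<^sub>m k\<close> is_rep_mult[OF rep x y]
    using \<sigma> T by (simp add: assoc_mult_mat[of _ k k _ k _ k])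
  finally show "T' * \<sigma> (x \<otimes>\<^bsub>G\<^esub> y) * T = T' * \<sigma> x * T * (T' * \<sigma> y * T)" ..
qed (use rep T in \<open>auto simp: is_rep_one is_rep_carrier\<close>)

lemma has_fixed_vector_conjugate:
  assumes rep: "is_rep G k \<sigma>" and T: "T \<in> carrier_mat k k" "T' \<in> carrier_mat k k"
    "T * T' = 1\<^sub>m k" "T' * T = 1\<^sub>m k"
    and "has_fixed_vector G k \<sigma>"
  shows "has_fixed_vector G k (\<lambda>x. T' * \<sigma> x * T)"
proof -
  obtain v where v: "v \<in> carrier_vec k" "v \<noteq> 0\<^sub>v k" "\<forall>x\<in>carrier G. \<sigma> x *\<^sub>v v = v"
    using assms(6) by (auto simp: has_fixed_vector_def)
  define u where "u = T' *\<^sub>v v"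
  have u: "u \<in> carrier_vec k" and Tu: "T *\<^sub>v u = v"
    using T v by (auto simp: u_def assoc_mult_mat_vec[symmetric])
  have "u \<noteq> 0\<^sub>v k"
    using Tu T v by auto
  moreover have "(T' * \<sigma> x * T) *\<^sub>v u = u" if x: "x \<in> carrier G" for x
  proof -
    have "(T' * \<sigma> x * T) *\<^sub>v u = (T' * \<sigma> x) *\<^sub>v (T *\<^sub>v u)"
      using T u is_rep_carrier[OF rep x] by (intro assoc_mult_mat_vec) auto
    also have "\<dots> = T' *\<^sub>v (\<sigma> x *\<^sub>v (T *\<^sub>v u))"
      using T u is_rep_carrier[OF rep x] by (intro assoc_mult_mat_vec) auto
    also have "\<dots> = T' *\<^sub>v v"
      using v x by (simp add: Tu)
    finally show ?thesis
      by (simp add: u_def)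
  qed
  ultimately show ?thesis
    using u by (auto simp: has_fixed_vector_def)
qed

context
  fixes G :: "('g, 'b) monoid_scheme" and k j :: nat and M :: "'g \<Rightarrow> complex mat"
  assumes rep: "is_rep G k M" and "j \<le> k"
    and triangular: "\<forall>x\<in>carrier G. block_triangular j (M x)"
begin

lemma is_rep_upper_block: "is_rep G j (\<lambda>x. upper_block j (M x))"
  using rep \<open>j \<le> k\<close> triangular
  by (auto simp: is_rep_def upper_block_mult[of _ k])

lemma is_rep_lower_block: "is_rep G (k - j) (\<lambda>x. lower_block j (M x))"
  using rep \<open>j \<le> k\<close> triangular
  by (auto simp: is_rep_def lower_block_mult[of _ k])

lemma has_fixed_vector_blocks:
  assumes "has_fixed_vector G k M"
  shows "has_fixed_vector G j (\<lambda>x. upper_block j (M x)) \<or>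
    has_fixed_vector G (k - j) (\<lambda>x. lower_block j (M x))"
proof -
  obtain u where u: "u \<in> carrier_vec k" "u \<noteq> 0\<^sub>v k" and fixed: "\<forall>x\<in>carrier G. M x *\<^sub>v u = u"
    using assms by (auto simp: has_fixed_vector_def)
  show ?thesis
  proof (cases "\<forall>l. j \<le> l \<longrightarrow> l < k \<longrightarrow> u $ l = 0")
    case True
    define v where "v = vec j (\<lambda>a. u $ a)"
    have "v \<noteq> 0\<^sub>v j"
    proof
      assume "v = 0\<^sub>v j"
      then have "u $ a = 0" if "a < k" for a
        using True that by (cases "a < j") (auto simp: v_def dest: arg_cong[of _ _ "\<lambda>w. w $ a"])
      with u show False by (auto intro!: eq_vecI)
    qed
    moreover have "upper_block j (M x) *\<^sub>v v = v" if "x \<in> carrier G" for x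
      using upper_block_mult_vec[OF is_rep_carrier[OF rep that] u(1) \<open>j \<le> k\<close> True] fixed that
      by (simp add: v_def)
    ultimately show ?thesis
      by (auto simp: has_fixed_vector_def v_def)
  next
    case False
    then obtain l where l: "j \<le> l" "l < k" "u $ l \<noteq> 0" by auto
    define v where "v = vec (k - j) (\<lambda>a. u $ (a + j))"
    have "l - j + j = l"
      using l by simp
    then have "v $ (l - j) \<noteq> 0"
      using l by (simp add: v_def)
    then have "v \<noteq> 0\<^sub>v (k - j)"
      using l by auto
    moreover have "lower_block j (M x) *\<^sub>v v = v" if "x \<in> carrier G" for x
      using lower_block_mult_vec[OF is_rep_carrier[OF rep that] u(1) \<open>j \<le> k\<close>] triangular fixed that
      by (simp add: v_def)
    ultimately show ?thesis
      by (auto simp: has_fixed_vector_def v_def)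
  qed
qed

end

lemma (in group) reducible_rep_block_triangular:
  assumes fin: "finite (carrier G)" and rep: "is_rep G k \<sigma>" and "0 < k" and "\<not> irr_rep G k \<sigma>"
  obtains j T T' where "0 < j" "j < k" "T \<in> carrier_mat k k" "T' \<in> carrier_mat k k"
    "T * T' = 1\<^sub>m k" "T' * T = 1\<^sub>m k" "\<forall>x\<in>carrier G. block_triangular j (T' * \<sigma> x * T)"
proof -
  obtain W where W: "invariant_subspace G k \<sigma> W" "W \<noteq> {0\<^sub>v k}" "W \<noteq> carrier_vec k"
    using assms unfolding irr_rep_def by auto
  have Wc: "W \<subseteq> carrier_vec k" and W0: "0\<^sub>v k \<in> W"
    and W_submodule: "submodule class_ring W (module_vec TYPE(complex) k)"
    and W_invariant: "\<forall>x\<in>carrier G. \<forall>v\<in>W. \<sigma> x *\<^sub>v v \<in> W"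
    using W(1) vec_module unfolding invariant_subspace_def submodule_def
    by (auto simp: module_vec_simps)
  obtain w where w: "w \<in> W" "w \<noteq> 0\<^sub>v k" using W(2) W0 by blast
  have wc: "w \<in> carrier_vec k" using w Wc by auto
  \<comment> \<open>\<open>W\<close> may be infinite; the orbit of \<open>w\<close> is finite and spans an invariant subspace of \<open>W\<close>.\<close>
  define S where "S = (\<lambda>x. \<sigma> x *\<^sub>v w) ` carrier G"
  have Sc: "S \<subseteq> carrier_vec k" unfolding S_def using is_rep_carrier[OF rep] wc by force
  have "S \<subseteq> W" unfolding S_def using W_invariant w by auto
  interpret vs: vec_space "TYPE(complex)" k .
  have "vs.span S \<subseteq> W"
    using \<open>S \<subseteq> W\<close> vs.span_is_subset[OF _ W_submodule] by blast
  then have proper: "vs.span S \<noteq> carrier_vec k"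
    using W(3) Wc by auto
  have wS: "w \<in> S" unfolding S_def using is_rep_one[OF rep] wc by force
  have S_invariant: "\<sigma> x *\<^sub>v s \<in> S" if x: "x \<in> carrier G" and s: "s \<in> S" for x s
  proof -
    obtain y where y: "y \<in> carrier G" "s = \<sigma> y *\<^sub>v w" using s unfolding S_def by auto
    have "\<sigma> x *\<^sub>v s = \<sigma> (x \<otimes> y) *\<^sub>v w"
      using x y wc is_rep_carrier[OF rep x] is_rep_carrier[OF rep y(1)]
      by (simp add: is_rep_mult[OF rep] assoc_mult_mat_vec)
    then show ?thesis unfolding S_def using x y by auto
  qed
  obtain j T T' where jT: "0 < j" "j < k" "T \<in> carrier_mat k k" "T' \<in> carrier_mat k k"
    "T * T' = 1\<^sub>m k" "T' * T = 1\<^sub>m k" "\<forall>i<j. col T i \<in> S"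
    "\<forall>s\<in>S. \<exists>c\<in>carrier_vec k. T *\<^sub>v c = s \<and> (\<forall>l. j \<le> l \<longrightarrow> l < k \<longrightarrow> c $ l = 0)"
    using vs.adapted_basis_matrix[OF _ Sc proper wS w(2)] fin unfolding S_def by blast
  have "block_triangular j (T' * \<sigma> x * T)" if x: "x \<in> carrier G" for x
  proof (rule block_triangular_conjugate[OF is_rep_carrier[OF rep x] jT(3,4,6)])
    fix i assume "i < j"
    then show "\<exists>c\<in>carrier_vec k. T *\<^sub>v c = \<sigma> x *\<^sub>v col T i \<and> (\<forall>l. j \<le> l \<longrightarrow> l < k \<longrightarrow> c $ l = 0)"
      using jT(7,8) S_invariant[OF x] by blast
  qed
  then show thesis
    using that[OF jT(1-6)] by blast
qed

lemma (in group) reducible_rep_splits: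
  assumes fin: "finite (carrier G)" and rep: "is_rep G k \<sigma>" and "0 < k" and "\<not> irr_rep G k \<sigma>"
  obtains j B D where "0 < j" "j < k" "is_rep G j B" "is_rep G (k - j) D"
    "\<And>x. x \<in> carrier G \<Longrightarrow> trace (\<sigma> x) = trace (B x) + trace (D x)"
    "\<And>x. x \<in> carrier G \<Longrightarrow> \<sigma> x = 1\<^sub>m k \<Longrightarrow> B x = 1\<^sub>m j \<and> D x = 1\<^sub>m (k - j)"
    "has_fixed_vector G k \<sigma> \<Longrightarrow> has_fixed_vector G j B \<or> has_fixed_vector G (k - j) D"
proof -
  obtain j T T' where j: "0 < j" "j < k" and T: "T \<in> carrier_mat k k" "T' \<in> carrier_mat k k"
    "T * T' = 1\<^sub>m k" "T' * T = 1\<^sub>m k"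
    and triangular: "\<forall>x\<in>carrier G. block_triangular j (T' * \<sigma> x * T)"
    using reducible_rep_block_triangular[OF assms] by blast
  define M where "M x = T' * \<sigma> x * T" for x
  have repM: "is_rep G k M"
    unfolding M_def by (rule is_rep_conjugate[OF rep T])
  have "j \<le> k" using j by simp
  note blocks = is_rep_upper_block[OF repM \<open>j \<le> k\<close>] is_rep_lower_block[OF repM \<open>j \<le> k\<close>]
    has_fixed_vector_blocks[OF repM \<open>j \<le> k\<close>]
  show thesis
  proof (rule that[OF j blocks(1,2)])
    fix x assume x: "x \<in> carrier G"
    have "trace (\<sigma> x) = trace (M x)"
      unfolding M_def using trace_similar[OF is_rep_carrier[OF rep x] T(1-3)] ..
    then show "trace (\<sigma> x) = trace (upper_block j (M x)) + trace (lower_block j (M x))"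
      using trace_blocks[OF is_rep_carrier[OF repM x] \<open>j \<le> k\<close>] by simp
    assume "\<sigma> x = 1\<^sub>m k"
    then have "M x = 1\<^sub>m k" using T by (simp add: M_def)
    then show "upper_block j (M x) = 1\<^sub>m j \<and> lower_block j (M x) = 1\<^sub>m (k - j)"
      using \<open>j \<le> k\<close> by simp
  next
    assume "has_fixed_vector G k \<sigma>"
    then have "has_fixed_vector G k M"
      unfolding M_def by (rule has_fixed_vector_conjugate[OF rep T])
    then show "has_fixed_vector G j (\<lambda>x. upper_block j (M x)) \<or>
        has_fixed_vector G (k - j) (\<lambda>x. lower_block j (M x))"
      using blocks(3) triangular by (simp add: M_def)
  qed (use triangular in \<open>simp add: M_def\<close>)+
qed

section \<open>Irreducible representations\<close>

lemma irr_rep_fixed_vector_trivial: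
  assumes irr: "irr_rep G k \<sigma>" and "has_fixed_vector G k \<sigma>" and x: "x \<in> carrier G"
  shows "\<sigma> x = 1\<^sub>m k"
proof -
  have rep: "is_rep G k \<sigma>" using irr unfolding irr_rep_def by auto
  obtain v where v: "v \<in> carrier_vec k" "v \<noteq> 0\<^sub>v k" and fixed: "\<forall>y\<in>carrier G. \<sigma> y *\<^sub>v v = v"
    using assms(2) by (auto simp: has_fixed_vector_def)
  define W where "W = {c \<cdot>\<^sub>v v | c. True}"
  have "invariant_subspace G k \<sigma> W"
    unfolding invariant_subspace_def W_def
  proof (intro conjI ballI allI)
    show "0\<^sub>v k \<in> {c \<cdot>\<^sub>v v | c. True}" using v by (intro CollectI exI[of _ 0]) auto
  next
    fix a b assume "a \<in> {c \<cdot>\<^sub>v v | c. True}" "b \<in> {c \<cdot>\<^sub>v v | c. True}"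
    then show "a + b \<in> {c \<cdot>\<^sub>v v | c. True}" by (auto simp: add_smult_distrib_vec[symmetric])
  next
    fix e a assume "a \<in> {c \<cdot>\<^sub>v v | c. True}"
    then show "e \<cdot>\<^sub>v a \<in> {c \<cdot>\<^sub>v v | c. True}" by (auto simp: smult_smult_assoc)
  next
    fix g a assume "g \<in> carrier G" "a \<in> {c \<cdot>\<^sub>v v | c. True}"
    then show "\<sigma> g *\<^sub>v a \<in> {c \<cdot>\<^sub>v v | c. True}"
      using mult_mat_vec[OF is_rep_carrier[OF rep] v(1)] fixed by auto
  qed (use v in auto)
  moreover have "v \<in> W" unfolding W_def by (intro CollectI exI[of _ 1]) simp
  ultimately have all: "W = carrier_vec k" using irr v(2) unfolding irr_rep_def by auto
  have "\<sigma> x *\<^sub>v u = 1\<^sub>m k *\<^sub>v u" if "u \<in> carrier_vec k" for u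
  proof -
    have "u \<in> W" using that all by simp
    then obtain c where "u = c \<cdot>\<^sub>v v" unfolding W_def by auto
    then show ?thesis
      using fixed x v(1) mult_mat_vec[OF is_rep_carrier[OF rep x] v(1)] by simp
  qed
  then show ?thesis
    by (intro eq_mat_if_mult_vec_eq[OF is_rep_carrier[OF rep x]]) auto
qed

lemma irr_rep_commuting_scalar:
  assumes irr: "irr_rep G n \<rho>" and A: "A \<in> carrier_mat n n"
    and comm: "\<forall>x\<in>carrier G. A * \<rho> x = \<rho> x * A"
  shows "\<exists>c. A = c \<cdot>\<^sub>m 1\<^sub>m n"
proof -
  have rep: "is_rep G n \<rho>" and "0 < n" using irr unfolding irr_rep_def by auto
  have "Polynomial.degree (char_poly A) = n" using degree_monic_char_poly[OF A] by simp
  then have "\<not> constant (poly (char_poly A))" using \<open>0 < n\<close> constant_degree[of "char_poly A"] by simp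
  then obtain c where "poly (char_poly A) c = 0" using fundamental_theorem_of_algebra by blast
  then have "eigenvalue A c" using eigenvalue_root_char_poly[OF A] by simp
  then obtain w where "eigenvector A w c" unfolding eigenvalue_def by auto
  then have w: "w \<in> carrier_vec n" "w \<noteq> 0\<^sub>v n" "A *\<^sub>v w = c \<cdot>\<^sub>v w"
    using A unfolding eigenvector_def by auto
  define W where "W = {v \<in> carrier_vec n. A *\<^sub>v v = c \<cdot>\<^sub>v v}"
  have "invariant_subspace G n \<rho> W"
    unfolding invariant_subspace_def
  proof (intro conjI ballI allI)
    fix a b assume "a \<in> W" "b \<in> W"
    then show "a + b \<in> W" unfolding W_def
      by (auto simp: mult_add_distrib_mat_vec[OF A] smult_add_distrib_vec)
  next
    fix e a assume "a \<in> W"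
    then show "e \<cdot>\<^sub>v a \<in> W" unfolding W_def
      by (auto simp: mult_mat_vec[OF A] smult_smult_assoc mult.commute)
  next
    fix g a assume g: "g \<in> carrier G" and a: "a \<in> W"
    note \<rho>g = is_rep_carrier[OF rep g]
    have "A *\<^sub>v (\<rho> g *\<^sub>v a) = (\<rho> g * A) *\<^sub>v a"
      using A \<rho>g a comm g unfolding W_def by (simp add: assoc_mult_mat_vec[symmetric])
    also have "\<dots> = c \<cdot>\<^sub>v (\<rho> g *\<^sub>v a)"
      using A \<rho>g a mult_mat_vec[OF \<rho>g] unfolding W_def by (simp add: assoc_mult_mat_vec)
    finally show "\<rho> g *\<^sub>v a \<in> W" using \<rho>g a unfolding W_def by auto
  qed (use A in \<open>auto simp: W_def\<close>)
  moreover have "w \<in> W" unfolding W_def using w by auto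
  ultimately have "W = carrier_vec n" using irr w(2) unfolding irr_rep_def by auto
  then have "A = c \<cdot>\<^sub>m 1\<^sub>m n"
    by (intro eq_mat_if_mult_vec_eq[OF A]) (auto simp: W_def smult_one_mult_mat_vec)
  then show ?thesis ..
qed

lemma (in group) irr_rep_central_trace_nonzero:
  assumes irr: "irr_rep G n \<rho>" and z: "z \<in> carrier G"
    and central: "\<forall>x\<in>carrier G. \<rho> z * \<rho> x = \<rho> x * \<rho> z"
  shows "trace (\<rho> z) \<noteq> 0"
proof -
  have rep: "is_rep G n \<rho>" and "0 < n" using irr unfolding irr_rep_def by auto
  obtain c where c: "\<rho> z = c \<cdot>\<^sub>m 1\<^sub>m n"
    using irr_rep_commuting_scalar[OF irr is_rep_carrier[OF rep z] central] by blast
  have "1\<^sub>m n = c \<cdot>\<^sub>m \<rho> (inv z)"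
    using is_rep_r_inv[OF rep z] is_rep_carrier[OF rep inv_closed[OF z]] c
    by (simp add: mult_smult_assoc_mat[of _ n n])
  then have "c \<noteq> 0"
    using \<open>0 < n\<close> is_rep_carrier[OF rep inv_closed[OF z]] by (auto dest!: arg_cong[of _ _ "\<lambda>A. A $$ (0, 0)"])
  then show ?thesis
    using c \<open>0 < n\<close> by (simp add: trace_def)
qed

lemma irr_rep_trace_natural:
  assumes irr: "irr_rep G k \<sigma>" and g: "g \<in> carrier G"
    and "trace (\<sigma> g) = 0 \<or> trace (\<sigma> g) = of_nat k"
  shows "\<exists>t::nat. trace (\<sigma> g) = of_nat t \<and> (has_fixed_vector G k \<sigma> \<longrightarrow> 0 < t)"
proof (cases "has_fixed_vector G k \<sigma>")
  case True
  then have "\<sigma> g = 1\<^sub>m k" using irr_rep_fixed_vector_trivial[OF irr _ g] by blast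
  then show ?thesis using irr by (simp add: trace_def irr_rep_def)
next
  case False
  from assms(3) show ?thesis
  proof
    assume "trace (\<sigma> g) = 0"
    then show ?thesis using False by (intro exI[of _ 0]) simp
  next
    assume "trace (\<sigma> g) = of_nat k"
    then show ?thesis using False by (intro exI[of _ k]) simp
  qed
qed

lemma (in group) rep_trace_natural:
  assumes fin: "finite (carrier G)" and g: "g \<in> carrier G" and N: "N \<subseteq> carrier G"
    and irr_traces: "\<And>n \<rho>. irr_rep G n \<rho> \<Longrightarrow> \<forall>x\<in>N. \<rho> x = 1\<^sub>m n \<Longrightarrow>
      trace (\<rho> g) = 0 \<or> trace (\<rho> g) = of_nat n"
    and "is_rep G k \<sigma>" "\<forall>x\<in>N. \<sigma> x = 1\<^sub>m k"
  shows "\<exists>t::nat. trace (\<sigma> g) = of_nat t \<and> (has_fixed_vector G k \<sigma> \<longrightarrow> 0 < t)"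
  using assms(5,6)
proof (induction k arbitrary: \<sigma> rule: less_induct)
  case (less k \<sigma>)
  have carrier: "\<sigma> g \<in> carrier_mat k k" using is_rep_carrier[OF less.prems(1) g] .
  consider "k = 0" | "0 < k" "irr_rep G k \<sigma>" | "0 < k" "\<not> irr_rep G k \<sigma>" by blast
  then show ?case
  proof cases
    case 1
    then have "v = 0\<^sub>v k" if "v \<in> carrier_vec k" for v
      using that by (auto intro!: eq_vecI)
    then have "\<not> has_fixed_vector G k \<sigma>"
      by (auto simp: has_fixed_vector_def)
    then show ?thesis
      using carrier 1 by (simp add: trace_def)
  next
    case 2
    then show ?thesis
      using irr_rep_trace_natural[OF 2(2) g irr_traces[OF 2(2) less.prems(2)]] by blast
  next
    case 3
    obtain j B D where j: "0 < j" "j < k" and rep: "is_rep G j B" "is_rep G (k - j) D"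
      and trace: "\<And>x. x \<in> carrier G \<Longrightarrow> trace (\<sigma> x) = trace (B x) + trace (D x)"
      and one: "\<And>x. x \<in> carrier G \<Longrightarrow> \<sigma> x = 1\<^sub>m k \<Longrightarrow> B x = 1\<^sub>m j \<and> D x = 1\<^sub>m (k - j)"
      and fixed: "has_fixed_vector G k \<sigma> \<Longrightarrow> has_fixed_vector G j B \<or> has_fixed_vector G (k - j) D"
      using reducible_rep_splits[OF fin less.prems(1) 3] by blast
    have kernel: "\<forall>x\<in>N. B x = 1\<^sub>m j \<and> D x = 1\<^sub>m (k - j)"
      using one less.prems(2) N by blast
    have "k - j < k" using j by simp
    obtain tB where "trace (B g) = of_nat tB" "has_fixed_vector G j B \<longrightarrow> 0 < tB"
      using less.IH[OF j(2) rep(1)] kernel by blast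
    moreover obtain tD where "trace (D g) = of_nat tD" "has_fixed_vector G (k - j) D \<longrightarrow> 0 < tD"
      using less.IH[OF \<open>k - j < k\<close> rep(2)] kernel by blast
    ultimately show ?thesis
      using trace[OF g] fixed by (intro exI[of _ "tB + tD"]) auto
  qed
qed

section \<open>The regular representation\<close>

text \<open>For a list \<open>es\<close> enumerating the carrier without repetitions, \<open>regular_rep G es g\<close> is the
  permutation matrix of left multiplication by \<open>g\<close>.\<close>

definition regular_rep :: "('g, 'b) monoid_scheme \<Rightarrow> 'g list \<Rightarrow> 'g \<Rightarrow> complex mat" where
  "regular_rep G es g = mat (length es) (length es) (\<lambda>(i, j). if g \<otimes>\<^bsub>G\<^esub> es ! j = es ! i then 1 else 0)"

lemma sum_if_nth_eq:
  assumes "distinct xs" "l0 < length xs" "xs ! l0 = a"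
  shows "(\<Sum>l<length xs. if a = xs ! l then f l else 0) = f l0"
proof -
  have "(\<Sum>l<length xs. if a = xs ! l then f l else 0) = (\<Sum>l<length xs. if l = l0 then f l else 0)"
    using assms by (intro sum.cong) (auto simp: nth_eq_iff_index_eq)
  then show ?thesis
    using assms(2) by simp
qed

context group
begin

lemma regular_rep_mult:
  assumes es: "distinct es" "set es = carrier G" and x: "x \<in> carrier G" and y: "y \<in> carrier G"
  shows "regular_rep G es (x \<otimes> y) = regular_rep G es x * regular_rep G es y"
proof (rule eq_matI)
  fix i j assume "i < dim_row (regular_rep G es x * regular_rep G es y)"
    "j < dim_col (regular_rep G es x * regular_rep G es y)"
  then have i: "i < length es" and j: "j < length es" by (auto simp: regular_rep_def)
  have es_j: "es ! j \<in> carrier G" using j nth_mem es(2) by blast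
  then have "y \<otimes> es ! j \<in> set es" using es y by simp
  then obtain l0 where l0: "l0 < length es" "es ! l0 = y \<otimes> es ! j"
    by (auto simp: in_set_conv_nth)
  have "(regular_rep G es x * regular_rep G es y) $$ (i, j)
      = (\<Sum>l<length es. (if x \<otimes> es ! l = es ! i then 1 else 0) * (if y \<otimes> es ! j = es ! l then 1 else 0))"
    using i j by (simp add: regular_rep_def scalar_prod_def row_def col_def lessThan_atLeast0)
  also have "\<dots> = (\<Sum>l<length es. if y \<otimes> es ! j = es ! l then (if x \<otimes> es ! l = es ! i then 1 else 0) else 0)"
    by (intro sum.cong) simp_all
  also have "\<dots> = (if x \<otimes> es ! l0 = es ! i then 1 else 0)"
    by (rule sum_if_nth_eq[OF es(1) l0])
  also have "\<dots> = regular_rep G es (x \<otimes> y) $$ (i, j)"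
    using i j x y es_j by (simp add: regular_rep_def l0(2) m_assoc)
  finally show "regular_rep G es (x \<otimes> y) $$ (i, j) = (regular_rep G es x * regular_rep G es y) $$ (i, j)" ..
qed (simp_all add: regular_rep_def)

lemma regular_rep_is_rep:
  assumes es: "distinct es" "set es = carrier G"
  shows "is_rep G (length es) (regular_rep G es)"
  unfolding is_rep_def
proof (intro conjI ballI)
  fix x y assume "x \<in> carrier G" "y \<in> carrier G"
  then show "regular_rep G es (x \<otimes> y) = regular_rep G es x * regular_rep G es y"
    by (rule regular_rep_mult[OF es])
next
  show "regular_rep G es \<one> = 1\<^sub>m (length es)"
  proof (rule eq_matI)
    fix i j assume "i < dim_row (1\<^sub>m (length es))" "j < dim_col (1\<^sub>m (length es))"
    then have ij: "i < length es" "j < length es" by simp_all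
    then have "es ! j \<in> carrier G" using nth_mem es(2) by blast
    then show "regular_rep G es \<one> $$ (i, j) = 1\<^sub>m (length es) $$ (i, j)"
      using ij es(1) by (simp add: regular_rep_def nth_eq_iff_index_eq)
  qed (simp_all add: regular_rep_def)
qed (simp add: regular_rep_def)

lemma trace_regular_rep:
  assumes es: "distinct es" "set es = carrier G" and g: "g \<in> carrier G" "g \<noteq> \<one>"
  shows "trace (regular_rep G es g) = 0"
proof -
  have "g \<otimes> es ! i \<noteq> es ! i" if "i < length es" for i
    using that es g by (metis nth_mem r_cancel_one)
  then show ?thesis
    by (simp add: trace_def regular_rep_def)
qed

lemma regular_rep_fixes_ones:
  assumes es: "distinct es" "set es = carrier G" and x: "x \<in> carrier G"
  shows "regular_rep G es x *\<^sub>v vec (length es) (\<lambda>_. 1) = vec (length es) (\<lambda>_. 1)"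
proof (rule eq_vecI)
  fix i assume "i < dim_vec (vec (length es) (\<lambda>_. 1 :: complex))"
  then have i: "i < length es" by simp
  have es_i: "es ! i \<in> carrier G" using i nth_mem es(2) by blast
  then have "inv x \<otimes> es ! i \<in> set es" using es x by simp
  then obtain l0 where l0: "l0 < length es" "es ! l0 = inv x \<otimes> es ! i"
    by (auto simp: in_set_conv_nth)
  have solve: "x \<otimes> es ! l = es ! i \<longleftrightarrow> inv x \<otimes> es ! i = es ! l" if "l < length es" for l
    using x es_i es that by (metis inv_solve_left nth_mem)
  have "(regular_rep G es x *\<^sub>v vec (length es) (\<lambda>_. 1)) $ i
      = (\<Sum>l<length es. if x \<otimes> es ! l = es ! i then 1 else 0)"
    using i by (simp add: regular_rep_def scalar_prod_def row_def lessThan_atLeast0)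
  also have "\<dots> = (\<Sum>l<length es. if inv x \<otimes> es ! i = es ! l then 1 else 0)"
    using solve by (intro sum.cong) simp_all
  also have "\<dots> = 1"
    by (rule sum_if_nth_eq[OF es(1) l0])
  finally show "(regular_rep G es x *\<^sub>v vec (length es) (\<lambda>_. 1)) $ i = vec (length es) (\<lambda>_. 1) $ i"
    using i by simp
qed (simp add: regular_rep_def)

end

lemma (in normal) quotient_regular_rep:
  assumes fin: "finite (carrier G)"
  obtains m \<pi> where "0 < m" "is_rep G m \<pi>" "\<forall>x\<in>H. \<pi> x = 1\<^sub>m m"
    "\<forall>g\<in>carrier G - H. trace (\<pi> g) = 0" "has_fixed_vector G m \<pi>"
proof -
  interpret Q: group "G Mod H" by (rule factorgroup_is_group)
  have "finite (carrier (G Mod H))"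
    using fin by (simp add: carrier_FactGroup)
  then obtain es where es: "distinct es" "set es = carrier (G Mod H)"
    using finite_distinct_list by blast
  define \<pi> where "\<pi> x = regular_rep (G Mod H) es (H #> x)" for x
  have "0 < length es"
    using es Q.one_closed by (metis length_pos_if_in_set)
  moreover have "is_rep G (length es) \<pi>"
    unfolding \<pi>_def
    by (rule is_rep_hom_comp[OF is_group Q.is_group r_coset_hom_Mod Q.regular_rep_is_rep[OF es]])
  moreover have "\<pi> x = 1\<^sub>m (length es)" if "x \<in> H" for x
    using that is_rep_one[OF Q.regular_rep_is_rep[OF es]]
    by (simp add: \<pi>_def coset_join2 subgroup_axioms)
  moreover have "trace (\<pi> g) = 0" if "g \<in> carrier G - H" for g
  proof -
    have "H #> g \<noteq> H" using that coset_join1[OF _ _ subgroup_axioms] by blast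
    then show ?thesis
      using that Q.trace_regular_rep[OF es] by (simp add: \<pi>_def carrier_FactGroup)
  qed
  moreover have "has_fixed_vector G (length es) \<pi>"
    unfolding has_fixed_vector_def
  proof (intro bexI conjI ballI)
    show "vec (length es) (\<lambda>_. 1 :: complex) \<noteq> 0\<^sub>v (length es)"
      using \<open>0 < length es\<close> by (auto dest!: arg_cong[of _ _ "\<lambda>v. v $ 0"])
    show "\<pi> x *\<^sub>v vec (length es) (\<lambda>_. 1) = vec (length es) (\<lambda>_. 1)" if "x \<in> carrier G" for x
      using that Q.regular_rep_fixes_ones[OF es] by (simp add: \<pi>_def carrier_FactGroup)
  qed simp
  ultimately show thesis
    using that by blast
qed

lemma (in group) irr_rep_trace_neither_zero_nor_degree:
  assumes fin: "finite (carrier G)" and N: "N \<lhd> G" and g: "g \<in> carrier G - N"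
  shows "\<exists>n \<rho>. irr_rep G n \<rho> \<and> (\<forall>x\<in>N. \<rho> x = 1\<^sub>m n) \<and> trace (\<rho> g) \<noteq> 0 \<and> trace (\<rho> g) \<noteq> of_nat n"
proof (rule ccontr)
  assume none: "\<not> ?thesis"
  have irr_traces: "\<And>n \<rho>. irr_rep G n \<rho> \<Longrightarrow> \<forall>x\<in>N. \<rho> x = 1\<^sub>m n \<Longrightarrow>
      trace (\<rho> g) = 0 \<or> trace (\<rho> g) = of_nat n"
    using none by auto
  obtain m \<pi> where "0 < m" and \<pi>: "is_rep G m \<pi>" "\<forall>x\<in>N. \<pi> x = 1\<^sub>m m"
    "\<forall>g\<in>carrier G - N. trace (\<pi> g) = 0" "has_fixed_vector G m \<pi>"
    by (rule normal.quotient_regular_rep[OF N fin])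
  have "N \<subseteq> carrier G" "g \<in> carrier G"
    using N g by (auto simp: normal_imp_subgroup subgroup.subset)
  \<comment> \<open>The permutation character on \<open>G/N\<close> vanishes at \<open>g\<close> but counts a trivial constituent.\<close>
  have "\<exists>t::nat. trace (\<pi> g) = of_nat t \<and> (has_fixed_vector G m \<pi> \<longrightarrow> 0 < t)"
    using \<open>g \<in> carrier G\<close> \<open>N \<subseteq> carrier G\<close> irr_traces \<pi>(1,2) by (rule rep_trace_natural[OF fin])
  then obtain t :: nat where "trace (\<pi> g) = of_nat t" "0 < t"
    using \<pi>(4) by blast
  with \<pi>(3) g show False by simp
qed

section \<open>Characters and the subgroups \<open>V\<close> and \<open>U\<close>\<close>

definition character :: "('g, 'b) monoid_scheme \<Rightarrow> ('g \<Rightarrow> complex mat) \<Rightarrow> 'g \<Rightarrow> complex" where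
  "character G \<rho> g = (if g \<in> carrier G then trace (\<rho> g) else 0)"

lemma character_in_Irr:
  assumes "irr_rep G n \<rho>"
  shows "character G \<rho> \<in> Irr G"
proof -
  have rep: "is_rep G n \<rho>" using assms by (simp add: irr_rep_def)
  have "character G \<rho> g = (if g \<in> carrier G then (\<Sum>i<n. \<rho> g $$ (i, i)) else 0)" for g
    using is_rep_carrier[OF rep, of g] by (cases "g \<in> carrier G") (simp_all add: character_def trace_def)
  then show ?thesis
    using assms unfolding Irr_def by blast
qed

context group
begin

lemma character_one: "is_rep G n \<rho> \<Longrightarrow> character G \<rho> \<one> = of_nat n"
  by (simp add: character_def is_rep_one trace_def)

lemma mem_V_grpI:
  assumes "irr_rep G n \<rho>" "n \<noteq> 1" "g \<in> carrier G" "trace (\<rho> g) \<noteq> 0"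
  shows "g \<in> V_grp G"
proof -
  have "character G \<rho> \<one> \<noteq> 1" "character G \<rho> g \<noteq> 0"
    using assms character_one[of n \<rho>] by (auto simp: irr_rep_def character_def)
  then show ?thesis
    using assms character_in_Irr[OF assms(1)] unfolding V_grp_def by (blast intro: generate.incl)
qed

lemma mem_V_relI:
  assumes "irr_rep G n \<rho>" "h \<in> H" "H \<subseteq> carrier G" "trace (\<rho> h) \<noteq> of_nat n"
    and "g \<in> carrier G" "trace (\<rho> g) \<noteq> 0"
  shows "g \<in> V_rel G H"
proof -
  have "h \<notin> char_kernel G (character G \<rho>)"
    using assms character_one[of n \<rho>] by (auto simp: irr_rep_def character_def char_kernel_def)
  then have "character G \<rho> \<in> Irr_rel G H"
    using assms character_in_Irr[OF assms(1)] unfolding Irr_rel_def by blast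
  moreover have "character G \<rho> g \<noteq> 0"
    using assms by (simp add: character_def)
  ultimately show ?thesis
    using assms(5) unfolding V_rel_def by (blast intro: generate.incl)
qed

lemma rep_kernel_subgroup:
  assumes rep: "is_rep G n \<rho>"
  shows "subgroup {x \<in> carrier G. \<rho> x = 1\<^sub>m n} G"
proof (rule subgroupI)
  fix a assume "a \<in> {x \<in> carrier G. \<rho> x = 1\<^sub>m n}"
  then have a: "a \<in> carrier G" "\<rho> a = 1\<^sub>m n" by simp_all
  then have "\<rho> (inv a) = \<rho> a * \<rho> (inv a)"
    using is_rep_carrier[OF rep inv_closed[OF a(1)]] by simp
  also have "\<dots> = 1\<^sub>m n" using is_rep_r_inv[OF rep a(1)] .
  finally show "inv a \<in> {x \<in> carrier G. \<rho> x = 1\<^sub>m n}" using a by simp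
qed (auto simp: is_rep_one[OF rep] is_rep_mult[OF rep])

lemma rep_commuting_if_trivial_on_derived:
  assumes rep: "is_rep G n \<rho>" and trivial: "\<forall>c\<in>derived G (carrier G). \<rho> c = 1\<^sub>m n"
    and x: "x \<in> carrier G" and y: "y \<in> carrier G"
  shows "\<rho> x * \<rho> y = \<rho> y * \<rho> x"
proof -
  define c where "c = inv x \<otimes> inv y \<otimes> inv (inv x) \<otimes> inv (inv y)"
  have c: "c \<in> derived G (carrier G)" "c \<in> carrier G"
    unfolding derived_def c_def using x y by (blast intro: generate.incl, simp)
  have "y \<otimes> x \<otimes> c = y \<otimes> (x \<otimes> inv x) \<otimes> (inv y \<otimes> (x \<otimes> y))"
    unfolding c_def using x y by (simp add: m_assoc) (metis inv_closed m_assoc m_closed r_inv l_one)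
  also have "\<dots> = x \<otimes> y"
    using x y by (simp add: m_assoc[symmetric])
  finally have "\<rho> x * \<rho> y = \<rho> (y \<otimes> x \<otimes> c)"
    using x y by (simp add: is_rep_mult[OF rep])
  also have "\<dots> = \<rho> (y \<otimes> x) * 1\<^sub>m n"
    using x y c trivial by (simp add: is_rep_mult[OF rep])
  also have "\<dots> = \<rho> y * \<rho> x"
    using x y is_rep_carrier[OF rep, of "y \<otimes> x"] by (simp add: is_rep_mult[OF rep] right_mult_one_mat)
  finally show ?thesis .
qed

lemma rep_trivial_on_derived_if_commuting:
  assumes rep: "is_rep G n \<rho>" and comm: "\<forall>x\<in>carrier G. \<forall>y\<in>carrier G. \<rho> x * \<rho> y = \<rho> y * \<rho> x"
    and c: "c \<in> derived G (carrier G)"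
  shows "\<rho> c = 1\<^sub>m n"
proof -
  define K where "K = {x \<in> carrier G. \<rho> x = 1\<^sub>m n}"
  have "subgroup K G"
    unfolding K_def by (rule rep_kernel_subgroup[OF rep])
  moreover have "derived_set G (carrier G) \<subseteq> K"
  proof
    fix c assume "c \<in> derived_set G (carrier G)"
    then obtain a b where ab: "a \<in> carrier G" "b \<in> carrier G" "c = a \<otimes> b \<otimes> inv a \<otimes> inv b" by auto
    note \<rho> = is_rep_carrier[OF rep]
    have "\<rho> c = \<rho> a * \<rho> b * \<rho> (inv a) * \<rho> (inv b)"
      using ab by (simp add: is_rep_mult[OF rep])
    also have "\<rho> a * \<rho> b = \<rho> b * \<rho> a" using comm ab by blast
    also have "\<rho> b * \<rho> a * \<rho> (inv a) * \<rho> (inv b) = \<rho> b * (\<rho> a * \<rho> (inv a)) * \<rho> (inv b)"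
      using ab \<rho> by (simp add: assoc_mult_mat[of _ n n _ n _ n])
    also have "\<dots> = 1\<^sub>m n"
      using ab \<rho>[of b] by (simp add: is_rep_r_inv[OF rep] right_mult_one_mat)
    finally show "c \<in> K" using ab unfolding K_def by auto
  qed
  ultimately have "derived G (carrier G) \<subseteq> K"
    unfolding derived_def by (intro generate_subgroup_incl)
  then show ?thesis
    using c unfolding K_def by auto
qed

lemma nonlinear_irr_rep_nonzero_on_derived:
  assumes fin: "finite (carrier G)" and g: "g \<in> derived G (carrier G)" "g \<noteq> \<one>"
  obtains n \<rho> where "irr_rep G n \<rho>" "n \<noteq> 1" "trace (\<rho> g) \<noteq> 0"
proof -
  have "g \<in> carrier G - {\<one>}" using g derived_in_carrier[OF subset_refl] by blast
  then obtain n \<rho> where \<rho>: "irr_rep G n \<rho>" "trace (\<rho> g) \<noteq> 0" "trace (\<rho> g) \<noteq> of_nat n"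
    using irr_rep_trace_neither_zero_nor_degree[OF fin one_is_normal] by blast
  have "n \<noteq> 1"
  proof
    assume "n = 1"
    then have rep: "is_rep G 1 \<rho>" using \<rho>(1) by (simp add: irr_rep_def)
    have "\<forall>x\<in>carrier G. \<forall>y\<in>carrier G. \<rho> x * \<rho> y = \<rho> y * \<rho> x"
      using is_rep_carrier[OF rep] mat_1x1_mult_comm by blast
    then have "\<rho> g = 1\<^sub>m 1"
      using rep_trivial_on_derived_if_commuting[OF rep] g by blast
    with \<rho>(3) \<open>n = 1\<close> show False by (simp add: trace_def)
  qed
  with \<rho> show thesis using that by blast
qed

lemma center_subgroup: "subgroup (center G) G"
proof (rule subgroupI)
  fix a assume a: "a \<in> center G"
  then have aG: "a \<in> carrier G" by (simp add: center_def)
  show "inv a \<in> center G" unfolding center_def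
  proof (intro CollectI conjI ballI)
    show "inv a \<in> carrier G" using aG by simp
    fix g assume g: "g \<in> carrier G"
    have "inv a \<otimes> g = inv a \<otimes> (g \<otimes> a) \<otimes> inv a"
      using aG g by (simp add: m_assoc)
    also have "\<dots> = inv a \<otimes> (a \<otimes> g) \<otimes> inv a"
      using a g by (simp add: center_def)
    also have "\<dots> = g \<otimes> inv a"
      using aG g by (simp add: m_assoc[symmetric])
    finally show "inv a \<otimes> g = g \<otimes> inv a" .
  qed
next
  fix a b assume a: "a \<in> center G" and b: "b \<in> center G"
  then have aG: "a \<in> carrier G" and bG: "b \<in> carrier G" by (simp_all add: center_def)
  show "a \<otimes> b \<in> center G" unfolding center_def
  proof (intro CollectI conjI ballI)
    show "a \<otimes> b \<in> carrier G" using aG bG by simp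
    fix g assume g: "g \<in> carrier G"
    have "a \<otimes> b \<otimes> g = a \<otimes> (g \<otimes> b)" using b g aG bG by (simp add: center_def m_assoc)
    also have "\<dots> = a \<otimes> g \<otimes> b" using g aG bG by (simp add: m_assoc)
    also have "\<dots> = g \<otimes> (a \<otimes> b)" using a g aG bG by (simp add: center_def m_assoc)
    finally show "a \<otimes> b \<otimes> g = g \<otimes> (a \<otimes> b)" .
  qed
qed (auto simp: center_def)

lemma derived_subset_V_grp:
  assumes fin: "finite (carrier G)"
  shows "derived G (carrier G) \<subseteq> V_grp G"
proof
  fix g assume g: "g \<in> derived G (carrier G)"
  show "g \<in> V_grp G"
  proof (cases "g = \<one>")
    case True
    then show ?thesis by (simp add: V_grp_def generate.one)
  next
    case False
    then obtain n \<rho> where "irr_rep G n \<rho>" "n \<noteq> 1" "trace (\<rho> g) \<noteq> 0"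
      using nonlinear_irr_rep_nonzero_on_derived[OF fin g] by blast
    then show ?thesis
      using mem_V_grpI g derived_in_carrier[OF subset_refl] by blast
  qed
qed

lemma center_subset_V_grp:
  assumes fin: "finite (carrier G)" and "\<not> comm_group G"
  shows "center G \<subseteq> V_grp G"
proof
  obtain x y where xy: "x \<in> carrier G" "y \<in> carrier G" "x \<otimes> y \<noteq> y \<otimes> x"
    using assms(2) group_comm_groupI by blast
  define c where "c = x \<otimes> y \<otimes> inv x \<otimes> inv y"
  have "c \<in> derived G (carrier G)"
    unfolding derived_def c_def using xy by (intro generate.incl) blast
  moreover have "c \<noteq> \<one>"
  proof
    assume "c = \<one>"
    have "c \<otimes> (y \<otimes> x) = x \<otimes> y \<otimes> inv x \<otimes> (inv y \<otimes> (y \<otimes> x))"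
      unfolding c_def using xy by (simp add: m_assoc)
    also have "inv y \<otimes> (y \<otimes> x) = x" using xy by (simp add: m_assoc[symmetric])
    also have "x \<otimes> y \<otimes> inv x \<otimes> x = x \<otimes> y" using xy by (simp add: m_assoc)
    finally show False
      using \<open>c = \<one>\<close> xy by simp
  qed
  ultimately obtain n \<rho> where \<rho>: "irr_rep G n \<rho>" "n \<noteq> 1"
    using nonlinear_irr_rep_nonzero_on_derived[OF fin] by blast
  fix z assume z: "z \<in> center G"
  then have "z \<in> carrier G" "\<forall>x\<in>carrier G. \<rho> z * \<rho> x = \<rho> x * \<rho> z"
    using \<rho>(1) by (auto simp: center_def irr_rep_def is_rep_mult[symmetric])
  then show "z \<in> V_grp G"
    using mem_V_grpI[OF \<rho>] irr_rep_central_trace_nonzero[OF \<rho>(1)] by blast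
qed

lemma normal_subset_V_rel:
  assumes fin: "finite (carrier G)" and H: "H \<lhd> G"
  shows "H \<subseteq> V_rel G H"
proof
  fix h assume h: "h \<in> H"
  have HG: "H \<subseteq> carrier G" using H by (simp add: normal_imp_subgroup subgroup.subset)
  show "h \<in> V_rel G H"
  proof (cases "h = \<one>")
    case True
    then show ?thesis by (simp add: V_rel_def generate.one)
  next
    case False
    then obtain n \<rho> where "irr_rep G n \<rho>" "trace (\<rho> h) \<noteq> 0" "trace (\<rho> h) \<noteq> of_nat n"
      using irr_rep_trace_neither_zero_nor_degree[OF fin one_is_normal] h HG by blast
    then show ?thesis
      using mem_V_relI h HG by blast
  qed
qed

lemma carrier_subset_V_rel:
  assumes fin: "finite (carrier G)" and H: "H \<lhd> G" and "\<not> H \<subseteq> derived G (carrier G)"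
  shows "carrier G \<subseteq> V_rel G H"
proof
  obtain h where h: "h \<in> H" "h \<notin> derived G (carrier G)" using assms(3) by blast
  have HG: "H \<subseteq> carrier G" using H by (simp add: normal_imp_subgroup subgroup.subset)
  obtain n \<rho> where \<rho>: "irr_rep G n \<rho>" "\<forall>c\<in>derived G (carrier G). \<rho> c = 1\<^sub>m n"
      "trace (\<rho> h) \<noteq> of_nat n"
    using irr_rep_trace_neither_zero_nor_degree[OF fin derived_is_normal[OF normal_self]] h HG by blast
  have comm: "\<forall>x\<in>carrier G. \<forall>y\<in>carrier G. \<rho> x * \<rho> y = \<rho> y * \<rho> x"
    using \<rho>(1,2) rep_commuting_if_trivial_on_derived by (auto simp: irr_rep_def)
  fix g assume g: "g \<in> carrier G"
  then have "trace (\<rho> g) \<noteq> 0"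
    using irr_rep_central_trace_nonzero[OF \<rho>(1)] comm by blast
  then show "g \<in> V_rel G H"
    using mem_V_relI[OF \<rho>(1) h(1) HG \<rho>(3) g] by blast
qed

lemma U_grp_subset_derived_inter_center:
  assumes fin: "finite (carrier G)" and "\<not> comm_group G"
  shows "U_grp G \<subseteq> derived G (carrier G) \<inter> center G"
proof -
  have "center G \<noteq> carrier G"
    using assms(2) group_comm_groupI by (auto simp: center_def)
  have "H \<subseteq> derived G (carrier G) \<inter> center G" if H: "H \<lhd> G" "V_rel G H \<subseteq> center G" for H
  proof -
    have "H \<subseteq> center G"
      using normal_subset_V_rel[OF fin H(1)] H(2) by blast
    moreover have "H \<subseteq> derived G (carrier G)"
      using carrier_subset_V_rel[OF fin H(1)] H(2) \<open>center G \<noteq> carrier G\<close>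
      by (auto simp: center_def)
    ultimately show ?thesis by blast
  qed
  then show ?thesis
    unfolding U_grp_def U_rel_def
    by (intro generate_subgroup_incl subgroups_Inter_pair derived_is_subgroup center_subgroup) auto
qed

lemma subset_set_mult_subgroup:
  assumes "A \<subseteq> carrier G" "subgroup B G"
  shows "A \<subseteq> A <#> B"
proof
  fix a assume "a \<in> A"
  then have "a = a \<otimes> \<one>" "\<one> \<in> B"
    using assms by (auto simp: subgroup.one_closed)
  with \<open>a \<in> A\<close> show "a \<in> A <#> B"
    unfolding set_mult_def by blast
qed

lemma derived_center_subset_V_grp:
  assumes "finite (carrier G)" and "\<not> comm_group G"
  shows "derived G (carrier G) <#> center G \<subseteq> V_grp G"
proof
  have "subgroup (V_grp G) G"
    unfolding V_grp_def by (rule generate_is_subgroup) blast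
  fix a assume "a \<in> derived G (carrier G) <#> center G"
  then obtain d z where "d \<in> derived G (carrier G)" "z \<in> center G" "a = d \<otimes> z"
    unfolding set_mult_def by blast
  then show "a \<in> V_grp G"
    using derived_subset_V_grp[OF assms(1)] center_subset_V_grp[OF assms] subgroup.m_closed[OF \<open>subgroup (V_grp G) G\<close>]
    by blast
qed

end

theorem lemma6p2:
  fixes G :: "('a, 'b) monoid_scheme"
  assumes "group G" and "finite (carrier G)" and "\<not> comm_group G"
  shows "U_grp G \<subseteq> derived G (carrier G) \<inter> center G \<and>
         derived G (carrier G) \<inter> center G \<subseteq> derived G (carrier G) <#>\<^bsub>G\<^esub> center G \<and>
         derived G (carrier G) <#>\<^bsub>G\<^esub> center G \<subseteq> V_grp G"
proof -
  interpret group G by fact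
  have "derived G (carrier G) \<subseteq> derived G (carrier G) <#>\<^bsub>G\<^esub> center G"
    by (rule subset_set_mult_subgroup[OF derived_in_carrier[OF subset_refl] center_subgroup])
  then show ?thesis
    using U_grp_subset_derived_inter_center[OF assms(2,3)] derived_center_subset_V_grp[OF assms(2,3)]
    by blast
qed

end
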